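(* Every complete multipartite graph with at least two nonempty parts admits an antimagic orientation.
   Context: A complete multipartite graph is a simple graph whose vertex set is partitioned into parts such that two vertices are adjacent if and only if they lie in different parts. For a digraph $D$ and an injective map $\tau$ from the arc set $A(D)$ to positive integers, $s_{(D,\tau)}(u)$ is the sum of labels of arcs entering $u$ minus the sum of labels of arcs leaving $u$ ($0$ if $u$ is isolated). If $D$ has $m$ arcs, a bijection $\tau:A(D)\to\{1,\dots,m\}$ is an antimagic labeling if the values $s_{(D,\tau)}(u)$ are pairwise distinct over all vertices. A graph admits an antimagic orientation if some orientation $D$ of it has an antimagic labeling. *)

theory Defs
  imports Main "HOL-Library.Disjoint_Sets"
begin

text \<open>Simple graphs are given by a vertex set V and a set E of 2-element subsets of V.\<close>

definition complete_multipartite_edges :: "'a set \<Rightarrow> 'a set set \<Rightarrow> 'a set set" where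
  "complete_multipartite_edges V P =
     {{u, v} | u v. u \<in> V \<and> v \<in> V \<and> (\<forall>X\<in>P. \<not> (u \<in> X \<and> v \<in> X))}"

definition is_orientation :: "'a set \<Rightarrow> 'a set set \<Rightarrow> ('a \<times> 'a) set \<Rightarrow> bool" where
  "is_orientation V E D \<longleftrightarrow>
     (\<forall>a\<in>D. {fst a, snd a} \<in> E) \<and>
     (\<forall>e\<in>E. \<exists>!a. a \<in> D \<and> e = {fst a, snd a})"

definition vertex_sum :: "('a \<times> 'a) set \<Rightarrow> ('a \<times> 'a \<Rightarrow> nat) \<Rightarrow> 'a \<Rightarrow> int" where
  "vertex_sum D \<tau> u =
     (\<Sum>a\<in>{a\<in>D. snd a = u}. int (\<tau> a)) - (\<Sum>a\<in>{a\<in>D. fst a = u}. int (\<tau> a))"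

definition antimagic_labeling :: "'a set \<Rightarrow> ('a \<times> 'a) set \<Rightarrow> ('a \<times> 'a \<Rightarrow> nat) \<Rightarrow> bool" where
  "antimagic_labeling V D \<tau> \<longleftrightarrow>
     bij_betw \<tau> D {1..card D} \<and> inj_on (vertex_sum D \<tau>) V"

definition has_antimagic_orientation :: "'a set \<Rightarrow> 'a set set \<Rightarrow> bool" where
  "has_antimagic_orientation V E \<longleftrightarrow>
     (\<exists>D \<tau>. is_orientation V E D \<and> antimagic_labeling V D \<tau>)"

end

theory Submission
  imports Defs
begin

text \<open>Split off one part A. The graph is the join of the independent set A with the
  complete multipartite graph on B = V - A, which is nonempty. Orient the edges inside B
  arbitrarily, label them 1, \<dots>, m, and orient every edge between A and B from A to B,
  giving the arc (a, b) the label m + 1 + i(a) |B| + j(b), where i enumerates A and j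
  enumerates B in increasing order of the vertex sums inside B. Every vertex a of A then
  has sum at most -|B|(m+1) - |B|^2 i(a), while every vertex b of B has sum at least
  -(|B|-1) m and the sums on B increase strictly with j(b).\<close>

definition simple_graph :: "'a set \<Rightarrow> 'a set set \<Rightarrow> bool" where
  "simple_graph V E \<longleftrightarrow> E \<subseteq> {{u, v} | u v. u \<in> V \<and> v \<in> V \<and> u \<noteq> v}"

definition complete_bipartite_edges :: "'a set \<Rightarrow> 'a set \<Rightarrow> 'a set set" where
  "complete_bipartite_edges A B = {{a, b} | a b. a \<in> A \<and> b \<in> B}"

lemma simple_graph_finite_edges:
  assumes "finite V" "simple_graph V E"
  shows "finite E"
proof (rule finite_subset)
  show "E \<subseteq> Pow V" using assms(2) by (auto simp: simple_graph_def)
qed (use assms(1) in simp)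

lemma exists_orientation:
  assumes "\<forall>e\<in>E. \<exists>u v. e = {u, v}"
  shows "\<exists>D. is_orientation V E D"
proof -
  define arc where "arc e = (SOME a. e = {fst a, snd a})" for e :: "'a set"
  have arc: "{fst (arc e), snd (arc e)} = e" if e: "e \<in> E" for e
  proof -
    obtain u v where "e = {u, v}" using assms e by blast
    then have "\<exists>a. e = {fst a, snd a}" by (intro exI[of _ "(u, v)"]) simp
    then show ?thesis
      unfolding arc_def by (rule someI_ex[where P = "\<lambda>a. e = {fst a, snd a}", symmetric])
  qed
  have "is_orientation V E (arc ` E)"
    unfolding is_orientation_def
  proof (intro conjI ballI)
    fix a assume "a \<in> arc ` E"
    then obtain e where "e \<in> E" "a = arc e" by blast
    then show "{fst a, snd a} \<in> E" using arc[of e] by simp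
  next
    fix e assume e: "e \<in> E"
    show "\<exists>!a. a \<in> arc ` E \<and> e = {fst a, snd a}"
    proof (rule ex1I)
      show "arc e \<in> arc ` E \<and> e = {fst (arc e), snd (arc e)}" using e arc[of e] by simp
    next
      fix a assume a: "a \<in> arc ` E \<and> e = {fst a, snd a}"
      then obtain e' where "e' \<in> E" "a = arc e'" by blast
      with a show "a = arc e" using arc[of e'] by simp
    qed
  qed
  then show ?thesis ..
qed

lemma is_orientation_Un:
  assumes "is_orientation V E1 D1" "is_orientation V E2 D2" "E1 \<inter> E2 = {}"
  shows "is_orientation V (E1 \<union> E2) (D1 \<union> D2)"
proof -
  have edge1: "{fst a, snd a} \<in> E1" if "a \<in> D1" for a
    using assms(1) that unfolding is_orientation_def by blast
  have edge2: "{fst a, snd a} \<in> E2" if "a \<in> D2" for a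
    using assms(2) that unfolding is_orientation_def by blast
  have "\<exists>!a. a \<in> D1 \<union> D2 \<and> e = {fst a, snd a}" if "e \<in> E1" for e
  proof -
    have "a \<in> D1 \<union> D2 \<and> e = {fst a, snd a} \<longleftrightarrow> a \<in> D1 \<and> e = {fst a, snd a}" for a
      using edge2 assms(3) that by blast
    then show ?thesis using assms(1) that unfolding is_orientation_def by simp
  qed
  moreover have "\<exists>!a. a \<in> D1 \<union> D2 \<and> e = {fst a, snd a}" if "e \<in> E2" for e
  proof -
    have "a \<in> D1 \<union> D2 \<and> e = {fst a, snd a} \<longleftrightarrow> a \<in> D2 \<and> e = {fst a, snd a}" for a
      using edge1 assms(3) that by blast
    then show ?thesis using assms(2) that unfolding is_orientation_def by simp
  qed
  ultimately show ?thesis unfolding is_orientation_def using edge1 edge2 by blast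
qed

lemma is_orientation_product:
  assumes "A \<inter> B = {}"
  shows "is_orientation V (complete_bipartite_edges A B) (A \<times> B)"
  using assms unfolding is_orientation_def complete_bipartite_edges_def
  by (fastforce simp: doubleton_eq_iff)

lemma finite_orientation:
  assumes "is_orientation V E D" "finite E"
  shows "finite D"
proof -
  have "inj_on (\<lambda>a. {fst a, snd a}) D"
    using assms(1) unfolding is_orientation_def inj_on_def by metis
  moreover have "(\<lambda>a. {fst a, snd a}) ` D \<subseteq> E"
    using assms(1) unfolding is_orientation_def by auto
  ultimately show ?thesis using assms(2) finite_imageD finite_subset by blast
qed

lemma vertex_sum_cong:
  assumes "\<And>a. a \<in> D \<Longrightarrow> \<tau> a = \<sigma> a"
  shows "vertex_sum D \<tau> u = vertex_sum D \<sigma> u"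
  unfolding vertex_sum_def using assms by (intro arg_cong2[where f = minus] sum.cong) auto

lemma vertex_sum_Un:
  assumes "finite D1" "finite D2" "D1 \<inter> D2 = {}"
  shows "vertex_sum (D1 \<union> D2) \<tau> u = vertex_sum D1 \<tau> u + vertex_sum D2 \<tau> u"
proof -
  have "{a \<in> D1 \<union> D2. P a} = {a \<in> D1. P a} \<union> {a \<in> D2. P a}" for P by auto
  then show ?thesis
    unfolding vertex_sum_def using assms by (simp add: sum.union_disjoint disjoint_iff)
qed

lemma vertex_sum_not_incident:
  assumes "\<And>a. a \<in> D \<Longrightarrow> fst a \<noteq> u \<and> snd a \<noteq> u"
  shows "vertex_sum D \<tau> u = 0"
proof -
  have "{a \<in> D. snd a = u} = {}" "{a \<in> D. fst a = u} = {}" using assms by auto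
  then show ?thesis unfolding vertex_sum_def by (simp only: sum.empty diff_self)
qed

lemma vertex_sum_product_source:
  assumes "a \<in> A" "a \<notin> B"
  shows "vertex_sum (A \<times> B) \<tau> a = - (\<Sum>b\<in>B. int (\<tau> (a, b)))"
proof -
  have "{x \<in> A \<times> B. snd x = a} = {}" "{x \<in> A \<times> B. fst x = a} = Pair a ` B"
    using assms by auto
  then show ?thesis unfolding vertex_sum_def by (simp only: sum.empty) (simp add: sum.reindex inj_on_def)
qed

lemma vertex_sum_product_target:
  assumes "b \<in> B" "b \<notin> A"
  shows "vertex_sum (A \<times> B) \<tau> b = (\<Sum>a\<in>A. int (\<tau> (a, b)))"
proof -
  have "{x \<in> A \<times> B. snd x = b} = (\<lambda>a. (a, b)) ` A" "{x \<in> A \<times> B. fst x = b} = {}"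
    using assms by auto
  then show ?thesis unfolding vertex_sum_def by (simp only:) (simp add: sum.reindex inj_on_def)
qed

lemma orientation_arc_simple:
  assumes "is_orientation V E D" "simple_graph B E" "a \<in> D"
  shows "fst a \<in> B" "snd a \<in> B" "fst a \<noteq> snd a"
proof -
  have "{fst a, snd a} \<in> E" using assms(1,3) unfolding is_orientation_def by blast
  then obtain u v where "{fst a, snd a} = {u, v}" "u \<in> B" "v \<in> B" "u \<noteq> v"
    using assms(2) unfolding simple_graph_def by blast
  then show "fst a \<in> B" "snd a \<in> B" "fst a \<noteq> snd a" by (auto simp: doubleton_eq_iff)
qed

lemma card_out_arcs_le:
  assumes "is_orientation V E D" "simple_graph B E" "finite B" "b \<in> B"
  shows "card {a \<in> D. fst a = b} \<le> card B - 1"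
proof -
  have "inj_on snd {a \<in> D. fst a = b}" by (auto intro!: inj_onI prod_eqI)
  moreover have "snd ` {a \<in> D. fst a = b} \<subseteq> B - {b}"
    using orientation_arc_simple[OF assms(1,2)] by fastforce
  ultimately have "card {a \<in> D. fst a = b} \<le> card (B - {b})"
    using assms(3) by (metis card_image card_mono finite_Diff)
  then show ?thesis using assms(3,4) by simp
qed

lemma vertex_sum_lower_bound:
  assumes "is_orientation V E D" "simple_graph B E" "finite B" "b \<in> B"
    and "\<And>a. a \<in> D \<Longrightarrow> \<tau> a \<le> m"
  shows "- (int (card B - 1) * int m) \<le> vertex_sum D \<tau> b"
proof -
  have "(\<Sum>a\<in>{a \<in> D. fst a = b}. int (\<tau> a)) \<le> (\<Sum>a\<in>{a \<in> D. fst a = b}. int m)"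
    using assms(5) by (intro sum_mono) auto
  also have "\<dots> \<le> int (card B - 1) * int m"
    using card_out_arcs_le[OF assms(1-4)] by (simp add: mult_right_mono)
  moreover have "0 \<le> (\<Sum>a\<in>{a \<in> D. snd a = b}. int (\<tau> a))" by (rule sum_nonneg) simp
  ultimately show ?thesis unfolding vertex_sum_def by linarith
qed

lemma exists_monotone_ranking:
  fixes g :: "'a \<Rightarrow> 'b::linorder"
  assumes "finite B"
  shows "\<exists>r. bij_betw r B {..<card B} \<and> (\<forall>x\<in>B. \<forall>y\<in>B. r x < r y \<longrightarrow> g x \<le> g y)"
proof -
  obtain xs where xs: "set xs = B" "distinct xs" using finite_distinct_list[OF assms] by blast
  define bs where "bs = sort_key g xs"
  have bs: "set bs = B" "distinct bs" "sorted (map g bs)" "length bs = card B"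
    using xs by (auto simp: bs_def distinct_card)
  have nth: "bij_betw ((!) bs) {..<card B} B" using bij_betw_nth[OF bs(2)] bs by simp
  define r where "r = inv_into {..<card B} ((!) bs)"
  have r: "bij_betw r B {..<card B}" unfolding r_def by (rule bij_betw_inv_into[OF nth])
  have "g x \<le> g y" if "x \<in> B" "y \<in> B" "r x < r y" for x y
  proof -
    have "bs ! r x = x" "bs ! r y = y"
      using that(1,2) nth unfolding r_def by (simp_all add: bij_betw_inv_into_right)
    moreover have "r y < length bs" using bij_betwE[OF r] that(2) bs(4) by auto
    moreover have "map g bs ! r x \<le> map g bs ! r y"
      using sorted_nth_mono[OF bs(3)] that(3) \<open>r y < length bs\<close> by simp
    ultimately show ?thesis using that(3) by simp
  qed
  with r show ?thesis by blast
qed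

lemma bij_betw_mixed_radix:
  fixes ra :: "'a \<Rightarrow> nat" and rb :: "'b \<Rightarrow> nat"
  assumes "bij_betw ra A {..<M}" "bij_betw rb B {..<N}"
  shows "bij_betw (\<lambda>(a, b). ra a * N + rb b) (A \<times> B) {..<M * N}"
proof (rule bij_betw_imageI)
  have ra: "inj_on ra A" "ra ` A = {..<M}" and rb: "inj_on rb B" "rb ` B = {..<N}"
    using assms by (auto simp: bij_betw_def)
  show "inj_on (\<lambda>(a, b). ra a * N + rb b) (A \<times> B)"
  proof (rule inj_onI, clarify)
    fix a b a' b'
    assume ab: "a \<in> A" "b \<in> B" "a' \<in> A" "b' \<in> B" and eq: "ra a * N + rb b = ra a' * N + rb b'"
    have "rb b < N" "rb b' < N" using ab rb(2) by auto
    then have "ra a = ra a'" "rb b = rb b'"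
      using arg_cong[OF eq, of "\<lambda>k. k div N"] arg_cong[OF eq, of "\<lambda>k. k mod N"] by simp_all
    then show "a = a' \<and> b = b'" using ab ra(1) rb(1) by (auto dest: inj_onD)
  qed
  show "(\<lambda>(a, b). ra a * N + rb b) ` (A \<times> B) = {..<M * N}"
  proof (intro equalityI subsetI)
    fix k assume "k \<in> (\<lambda>(a, b). ra a * N + rb b) ` (A \<times> B)"
    then obtain a b where ab: "a \<in> A" "b \<in> B" "k = ra a * N + rb b" by auto
    have "ra a < M" "rb b < N" using ab ra(2) rb(2) by auto
    then have "k < (ra a + 1) * N" using ab(3) by simp
    also have "\<dots> \<le> M * N" using \<open>ra a < M\<close> by (intro mult_le_mono1) simp
    finally show "k \<in> {..<M * N}" by simp
  next
    fix k assume "k \<in> {..<M * N}"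
    then have "k div N < M" "N > 0" by (auto simp: less_mult_imp_div_less intro: gr0I)
    then have "k div N \<in> ra ` A" "k mod N \<in> rb ` B" using ra(2) rb(2) by auto
    then obtain a b where "a \<in> A" "b \<in> B" "ra a = k div N" "rb b = k mod N" by auto
    then show "k \<in> (\<lambda>(a, b). ra a * N + rb b) ` (A \<times> B)"
      by (intro image_eqI[of _ _ "(a, b)"]) auto
  qed
qed

lemma inj_on_add_monotone_ranking:
  fixes g :: "'a \<Rightarrow> int"
  assumes "inj_on r B" "\<forall>x\<in>B. \<forall>y\<in>B. r x < r y \<longrightarrow> g x \<le> g y" "c > 0"
  shows "inj_on (\<lambda>x. g x + int c * int (r x)) B"
proof (rule inj_onI)
  have not_less: "\<not> r x < r y"
    if "x \<in> B" "y \<in> B" "g x + int c * int (r x) = g y + int c * int (r y)" for x y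
  proof
    assume "r x < r y"
    then have "g x \<le> g y" "int c * int (r x) < int c * int (r y)"
      using assms(2,3) that(1,2) by simp_all
    then show False using that(3) by linarith
  qed
  fix x y assume "x \<in> B" "y \<in> B" "g x + int c * int (r x) = g y + int c * int (r y)"
  then have "r x = r y" using not_less by (metis nat_neq_iff)
  then show "x = y" using assms(1) \<open>x \<in> B\<close> \<open>y \<in> B\<close> by (auto dest: inj_onD)
qed

locale join_labeling =
  fixes A B :: "'a set" and E :: "'a set set" and DB :: "('a \<times> 'a) set"
    and \<tau>B :: "'a \<times> 'a \<Rightarrow> nat" and ra rb :: "'a \<Rightarrow> nat"
  assumes finite_A: "finite A" and finite_B: "finite B" and disjoint: "A \<inter> B = {}"
    and A_nonempty: "A \<noteq> {}" and B_nonempty: "B \<noteq> {}"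
    and simple: "simple_graph B E"
    and orientation_DB: "is_orientation (A \<union> B) E DB"
    and bij_\<tau>B: "bij_betw \<tau>B DB {1..card DB}"
    and bij_ra: "bij_betw ra A {..<card A}"
    and bij_rb: "bij_betw rb B {..<card B}"
    and rb_sorted: "\<forall>x\<in>B. \<forall>y\<in>B. rb x < rb y \<longrightarrow> vertex_sum DB \<tau>B x \<le> vertex_sum DB \<tau>B y"
begin

definition arcs :: "('a \<times> 'a) set" where
  "arcs = DB \<union> A \<times> B"

definition label :: "'a \<times> 'a \<Rightarrow> nat" where
  "label x = (if x \<in> DB then \<tau>B x else card DB + 1 + (ra (fst x) * card B + rb (snd x)))"

lemma finite_DB: "finite DB"
  using finite_orientation orientation_DB simple_graph_finite_edges[OF finite_B simple] by blast

lemma DB_in_B: "x \<in> DB \<Longrightarrow> fst x \<in> B \<and> snd x \<in> B"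
  using orientation_arc_simple[OF orientation_DB simple] by blast

lemma DB_product_disjoint: "DB \<inter> A \<times> B = {}"
  using DB_in_B disjoint by fastforce

lemma is_orientation_arcs: "is_orientation (A \<union> B) (E \<union> complete_bipartite_edges A B) arcs"
  unfolding arcs_def
proof (rule is_orientation_Un[OF orientation_DB is_orientation_product[OF disjoint]])
  have "e \<subseteq> B" if "e \<in> E" for e
    using simple that unfolding simple_graph_def by blast
  moreover have "e \<inter> A \<noteq> {}" if "e \<in> complete_bipartite_edges A B" for e
    using that unfolding complete_bipartite_edges_def by blast
  ultimately show "E \<inter> complete_bipartite_edges A B = {}"
    using disjoint by blast
qed

lemma bij_label: "bij_betw label arcs {1..card arcs}"
proof -
  let ?m = "card DB" and ?n = "card A * card B"
  have "bij_betw label DB {1..?m}"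
    using bij_\<tau>B by (rule bij_betw_cong[THEN iffD1, rotated]) (simp add: label_def)
  moreover have "bij_betw label (A \<times> B) {?m + 1..<?n + (?m + 1)}"
  proof -
    have "bij_betw ((+) (?m + 1)) {..<?n} {?m + 1..<?n + (?m + 1)}"
      by (simp only: bij_betw_add lessThan_atLeast0 image_add_atLeastLessThan) simp
    with bij_betw_mixed_radix[OF bij_ra bij_rb]
    have "bij_betw ((+) (?m + 1) \<circ> (\<lambda>(a, b). ra a * card B + rb b)) (A \<times> B) {?m + 1..<?n + (?m + 1)}"
      by (rule bij_betw_trans)
    then show ?thesis
      by (rule bij_betw_cong[THEN iffD1, rotated]) (use DB_product_disjoint in \<open>auto simp: label_def\<close>)
  qed
  ultimately have "bij_betw label arcs ({1..?m} \<union> {?m + 1..<?n + (?m + 1)})"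
    unfolding arcs_def by (rule bij_betw_combine) auto
  moreover have "{1..?m} \<union> {?m + 1..<?n + (?m + 1)} = {1..?m + ?n}" by auto
  ultimately show ?thesis using bij_betw_same_card by fastforce
qed

lemma label_product: "a \<in> A \<Longrightarrow> b \<in> B \<Longrightarrow> label (a, b) = card DB + 1 + (ra a * card B + rb b)"
  using DB_product_disjoint by (auto simp: label_def)

lemma vertex_sum_arcs:
  "vertex_sum arcs label u = vertex_sum DB \<tau>B u + vertex_sum (A \<times> B) label u"
proof -
  have "vertex_sum DB label u = vertex_sum DB \<tau>B u"
    by (rule vertex_sum_cong) (simp add: label_def)
  then show ?thesis
    unfolding arcs_def using finite_DB finite_A finite_B DB_product_disjoint
    by (simp add: vertex_sum_Un)
qed

lemma vertex_sum_source:
  assumes "a \<in> A"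
  shows "vertex_sum arcs label a
    = - (\<Sum>b\<in>B. int (card DB + 1 + rb b)) - int (card B * (ra a * card B))"
proof -
  have "a \<notin> B" using assms disjoint by blast
  have "vertex_sum DB \<tau>B a = 0"
    using DB_in_B \<open>a \<notin> B\<close> by (intro vertex_sum_not_incident) blast
  moreover have "(\<Sum>b\<in>B. int (label (a, b)))
      = (\<Sum>b\<in>B. int (card DB + 1 + rb b) + int (ra a * card B))"
    using assms by (intro sum.cong) (simp_all add: label_product)
  ultimately show ?thesis
    using vertex_sum_product_source[OF assms \<open>a \<notin> B\<close>]
    by (simp add: vertex_sum_arcs sum.distrib)
qed

lemma vertex_sum_target:
  assumes "b \<in> B"
  shows "vertex_sum arcs label b
    = vertex_sum DB \<tau>B b + (\<Sum>a\<in>A. int (card DB + 1 + ra a * card B)) + int (card A * rb b)"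
proof -
  have "b \<notin> A" using assms disjoint by blast
  have "(\<Sum>a\<in>A. int (label (a, b)))
      = (\<Sum>a\<in>A. int (card DB + 1 + ra a * card B) + int (rb b))"
    using assms by (intro sum.cong) (simp_all add: label_product)
  then show ?thesis
    using vertex_sum_product_target[OF assms \<open>b \<notin> A\<close>]
    by (simp add: vertex_sum_arcs sum.distrib)
qed

lemma source_below_target:
  assumes "a \<in> A" "b \<in> B"
  shows "vertex_sum arcs label a < vertex_sum arcs label b"
proof -
  let ?m = "card DB" and ?N = "card B"
  have "vertex_sum arcs label a \<le> - (\<Sum>b\<in>B. int (?m + 1 + rb b))"
    using vertex_sum_source[OF assms(1)] by simp
  also have "\<dots> \<le> - (\<Sum>b\<in>B. int (?m + 1))"
    by (intro le_imp_neg_le sum_mono) simp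
  also have "\<dots> = - (int ?N * int ?m + int ?N)"
    by (simp add: algebra_simps)
  also have "\<dots> < - (int (?N - 1) * int ?m)"
  proof -
    have "?N \<ge> 1" using B_nonempty finite_B by (simp add: Suc_le_eq card_gt_0_iff)
    then show ?thesis by (simp add: of_nat_diff algebra_simps)
  qed
  also have "\<dots> \<le> vertex_sum DB \<tau>B b"
    using bij_\<tau>B by (intro vertex_sum_lower_bound[OF orientation_DB simple finite_B assms(2)])
      (auto dest: bij_betwE)
  also have "\<dots> \<le> vertex_sum arcs label b"
    using vertex_sum_target[OF assms(2)] by (simp add: sum_nonneg)
  finally show ?thesis .
qed

lemma inj_on_vertex_sum: "inj_on (vertex_sum arcs label) (A \<union> B)"
  unfolding inj_on_Un
proof (intro conjI)
  have "card B > 0" using B_nonempty finite_B by (simp add: card_gt_0_iff)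
  then show "inj_on (vertex_sum arcs label) A"
    using bij_ra by (auto intro!: inj_onI simp: vertex_sum_source bij_betw_def dest: inj_onD)
  have "inj_on (\<lambda>b. (vertex_sum DB \<tau>B b + (\<Sum>a\<in>A. int (card DB + 1 + ra a * card B)))
      + int (card A) * int (rb b)) B"
    using A_nonempty finite_A bij_rb rb_sorted
    by (intro inj_on_add_monotone_ranking) (auto simp: bij_betw_def card_gt_0_iff)
  then show "inj_on (vertex_sum arcs label) B"
    by (rule inj_on_cong[THEN iffD1, rotated]) (simp add: vertex_sum_target)
  show "vertex_sum arcs label ` (A - B) \<inter> vertex_sum arcs label ` (B - A) = {}"
    using source_below_target by (force simp: less_le)
qed

lemma antimagic_labeling_arcs: "antimagic_labeling (A \<union> B) arcs label"
  unfolding antimagic_labeling_def using bij_label inj_on_vertex_sum by blast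

end

theorem has_antimagic_orientation_join:
  assumes "finite A" "finite B" "A \<inter> B = {}" "A \<noteq> {}" "B \<noteq> {}" "simple_graph B E"
  shows "has_antimagic_orientation (A \<union> B) (E \<union> complete_bipartite_edges A B)"
proof -
  have "\<forall>e\<in>E. \<exists>u v. e = {u, v}"
  proof
    fix e assume "e \<in> E"
    then have "e \<in> {{u, v} | u v. u \<in> B \<and> v \<in> B \<and> u \<noteq> v}"
      using assms(6) unfolding simple_graph_def by blast
    then show "\<exists>u v. e = {u, v}" by blast
  qed
  then obtain DB where DB: "is_orientation (A \<union> B) E DB" using exists_orientation by blast
  have "finite DB"
    using finite_orientation[OF DB simple_graph_finite_edges[OF assms(2,6)]] .
  then obtain \<tau>B where \<tau>B: "bij_betw \<tau>B DB {1..card DB}"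
    using finite_same_card_bij[OF _ finite_atLeastAtMost, of DB 1 "card DB"] by auto
  obtain ra where ra: "bij_betw ra A {..<card A}"
    using finite_same_card_bij[OF assms(1) finite_lessThan, of "card A"] by auto
  obtain rb where rb: "bij_betw rb B {..<card B}"
    and sorted: "\<forall>x\<in>B. \<forall>y\<in>B. rb x < rb y \<longrightarrow> vertex_sum DB \<tau>B x \<le> vertex_sum DB \<tau>B y"
    using exists_monotone_ranking[OF assms(2)] by blast
  interpret join_labeling A B E DB \<tau>B ra rb
    by (rule join_labeling.intro[OF assms DB \<tau>B ra rb sorted])
  show ?thesis
    unfolding has_antimagic_orientation_def using is_orientation_arcs antimagic_labeling_arcs by blast
qed

lemma simple_graph_complete_multipartite:
  assumes "V \<subseteq> \<Union>P"
  shows "simple_graph V (complete_multipartite_edges V P)"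
  unfolding simple_graph_def
proof
  fix e assume "e \<in> complete_multipartite_edges V P"
  then obtain u v where uv: "e = {u, v}" "u \<in> V" "v \<in> V" "\<forall>X\<in>P. \<not> (u \<in> X \<and> v \<in> X)"
    unfolding complete_multipartite_edges_def by blast
  moreover have "u \<noteq> v" using uv(2,4) assms by blast
  ultimately show "e \<in> {{u, v} | u v. u \<in> V \<and> v \<in> V \<and> u \<noteq> v}" by blast
qed

lemma complete_multipartite_edges_split:
  assumes "partition_on V P" "A \<in> P"
  shows "complete_multipartite_edges V P
    = complete_multipartite_edges (V - A) (P - {A}) \<union> complete_bipartite_edges A (V - A)"
    (is "?E = ?EB \<union> ?C")
proof (intro equalityI subsetI)
  fix e assume "e \<in> ?E"
  then obtain u v where uv: "e = {u, v}" "u \<in> V" "v \<in> V" "\<forall>X\<in>P. \<not> (u \<in> X \<and> v \<in> X)"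
    unfolding complete_multipartite_edges_def by blast
  consider "u \<notin> A" "v \<notin> A" | "u \<in> A" "v \<notin> A" | "v \<in> A" "u \<notin> A"
    using uv(4) assms(2) by blast
  then show "e \<in> ?EB \<union> ?C"
  proof cases
    case 1
    then have "e \<in> ?EB" using uv unfolding complete_multipartite_edges_def by blast
    then show ?thesis ..
  next
    case 2
    then have "e \<in> ?C" using uv unfolding complete_bipartite_edges_def by blast
    then show ?thesis ..
  next
    case 3
    then have "e = {v, u}" using uv(1) by (simp add: insert_commute)
    with 3 have "e \<in> ?C" using uv(2) unfolding complete_bipartite_edges_def by blast
    then show ?thesis ..
  qed
next
  have A_V: "A \<subseteq> V" using assms partition_onD1 by blast
  have same_part: "X = A" if "X \<in> P" "x \<in> X" "x \<in> A" for X x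
    using partition_onD2[OF assms(1)] assms(2) that unfolding disjoint_def by blast
  fix e assume "e \<in> ?EB \<union> ?C"
  then show "e \<in> ?E"
  proof
    assume "e \<in> ?EB"
    then obtain u v where "e = {u, v}" "u \<in> V - A" "v \<in> V - A" "\<forall>X\<in>P - {A}. \<not> (u \<in> X \<and> v \<in> X)"
      unfolding complete_multipartite_edges_def by blast
    then show ?thesis unfolding complete_multipartite_edges_def by blast
  next
    assume "e \<in> ?C"
    then obtain a b where ab: "e = {a, b}" "a \<in> A" "b \<in> V - A"
      unfolding complete_bipartite_edges_def by blast
    then have "\<forall>X\<in>P. \<not> (a \<in> X \<and> b \<in> X)" using same_part by blast
    then show ?thesis using ab A_V unfolding complete_multipartite_edges_def by blast
  qed
qed

theorem mainTheorem5:
  fixes V :: "'a set" and P :: "'a set set"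
  assumes "finite V"
    and "partition_on V P"
    and "card P \<ge> 2"
  shows "has_antimagic_orientation V (complete_multipartite_edges V P)"
proof -
  have "finite P" using assms(3) by (intro card_ge_0_finite) simp
  have "\<not> card P \<le> Suc 0" using assms(3) by simp
  then obtain A A' where parts: "A \<in> P" "A' \<in> P" "A' \<noteq> A"
    unfolding card_le_Suc0_iff_eq[OF \<open>finite P\<close>] by blast
  have "A \<noteq> {}" "A' \<noteq> {}" "A \<subseteq> V" "A' \<subseteq> V"
    using parts partition_onD1[OF assms(2)] partition_onD3[OF assms(2)] by auto
  moreover have "A' \<inter> A = {}"
    using parts partition_onD2[OF assms(2)] unfolding disjoint_def by blast
  ultimately have "V - A \<noteq> {}" "V = A \<union> (V - A)" by blast+
  have "has_antimagic_orientation (A \<union> (V - A))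
      (complete_multipartite_edges (V - A) (P - {A}) \<union> complete_bipartite_edges A (V - A))"
  proof (rule has_antimagic_orientation_join)
    show "simple_graph (V - A) (complete_multipartite_edges (V - A) (P - {A}))"
      using partition_onD1[OF assms(2)] by (intro simple_graph_complete_multipartite) blast
  qed (use assms(1) \<open>A \<subseteq> V\<close> \<open>A \<noteq> {}\<close> \<open>V - A \<noteq> {}\<close> finite_subset in auto)
  then show ?thesis
    using \<open>V = A \<union> (V - A)\<close> complete_multipartite_edges_split[OF assms(2) parts(1)] by simp
qed

end
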